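(* Let $T$ be an Aronszajn tree and let $G$ be a sparse $T$-graph with the following property: for every $t \in T$ there is a finite set $S_t \subseteq \{s \in T : s < t\}$ such that every $t' > t$ has all its down-neighbours (in $G$) that lie below $t$ inside $S_t$. Then the ray inflation $G \sharp \mathbb{N}$ witnesses that $\mathrm{HC}(\aleph_1)$ fails: it has an end $\varepsilon$ of degree $\aleph_1$ such that no set of $\aleph_1$ pairwise disjoint rays in $\varepsilon$ admits a connected ray graph in $G\sharp\mathbb{N}$.
   Context: An order tree is a partial order $(T,\le)$ with a unique minimal element (the root) in which every set $\lceil t\rceil=\{t' : t' \le t\}$ is well-ordered. The height of $t$ is the order type of $\{t' : t'<t\}$; the $i$-th level $T^i$ is the set of points of height $i$; a branch is a maximal chain. $t$ is a successor of $t'$ (and $t'$ its predecessor) if $t'<t$ with nothing strictly between; a point with no predecessor is a limit. An Aronszajn tree is an order tree of cardinality $\aleph_1$ all of whose branches and levels are countable. A $T$-graph is a graph $G$ with $V(G)=T$ such that the endvertices of every edge are comparable in $T$ and, for every $t$, the set of neighbours of $t$ below $t$ (its down-neighbours) is cofinal in $\{s : s<t\}$. $G$ is sparse if for every $t$ the set of down-neighbours of $t$ has order type $\mathrm{cf}(\{s : s<t\})$; for trees of height at most $\omega_1$ this means a successor's unique down-neighbour is its predecessor and the down-neighbours of a non-root limit form a cofinal $\omega$-sequence below it. For such $G$ (with $T$ of height at most $\omega_1$), the ray inflation $G\sharp\mathbb{N}$ has vertex set $T\times\mathbb{N}$ and edges: $(t,n)(t,n+1)$ for all $t,n$; $(t,n)(t',n)$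 for all $n$ whenever $t$ is a successor with predecessor $t'$; and $(t,n)(t_n,n)$ for all $n$ whenever $t$ is a non-root limit with down-neighbours $t_0<t_1<t_2<\cdots$. A ray is a one-way infinite path; two rays are equivalent if joined by infinitely many disjoint paths; ends are equivalence classes; the degree of an end is the maximal cardinality of a set of disjoint rays in it. Given a set $\mathcal{R}$ of disjoint equivalent rays, a graph $H$ on $\mathcal{R}$ is a ray graph if there is a set $\mathcal{P}$ of independent paths (no inner vertex of one on another), each meeting $\bigcup\mathcal{R}$ exactly in its endvertices, such that for every edge $RS$ of $H$ there are infinitely many disjoint $R$--$S$ paths in $\mathcal{P}$. $\mathrm{HC}(\kappa)$ states that every end of degree $\kappa$ of every graph contains $\kappa$ disjoint rays admitting a connected ray graph. *)

theory Defs
  imports Main "HOL-Library.Countable_Set"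
begin

definition has_card_aleph1 :: "'a set \<Rightarrow> bool" where
  "has_card_aleph1 A \<longleftrightarrow> (card_of A, cardSuc (card_of (UNIV :: nat set))) \<in> ordIso"

definition card_le_aleph1 :: "'a set \<Rightarrow> bool" where
  "card_le_aleph1 A \<longleftrightarrow> (card_of A, cardSuc (card_of (UNIV :: nat set))) \<in> ordLeq"

definition tlt :: "('a \<Rightarrow> 'a \<Rightarrow> bool) \<Rightarrow> 'a \<Rightarrow> 'a \<Rightarrow> bool" where
  "tlt le x y \<longleftrightarrow> le x y \<and> x \<noteq> y"

definition down_closed :: "'a set \<Rightarrow> ('a \<Rightarrow> 'a \<Rightarrow> bool) \<Rightarrow> 'a \<Rightarrow> 'a set" where
  "down_closed T le t = {s \<in> T. le s t}"

definition below :: "'a set \<Rightarrow> ('a \<Rightarrow> 'a \<Rightarrow> bool) \<Rightarrow> 'a \<Rightarrow> 'a set" where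
  "below T le t = {s \<in> T. tlt le s t}"

definition order_tree :: "'a set \<Rightarrow> ('a \<Rightarrow> 'a \<Rightarrow> bool) \<Rightarrow> bool" where
  "order_tree T le \<longleftrightarrow>
     (\<forall>x\<in>T. le x x) \<and>
     (\<forall>x\<in>T. \<forall>y\<in>T. le x y \<and> le y x \<longrightarrow> x = y) \<and>
     (\<forall>x\<in>T. \<forall>y\<in>T. \<forall>z\<in>T. le x y \<and> le y z \<longrightarrow> le x z) \<and>
     (\<exists>!r\<in>T. \<not> (\<exists>s\<in>T. tlt le s r)) \<and>
     (\<forall>t\<in>T. (\<forall>x\<in>down_closed T le t. \<forall>y\<in>down_closed T le t. le x y \<or> le y x) \<and>
             (\<forall>A. A \<subseteq> down_closed T le t \<and> A \<noteq> {} \<longrightarrow> (\<exists>m\<in>A. \<forall>a\<in>A. le m a)))"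

text \<open>The well-order on the strict down-set of t; its order type is the height of t.\<close>
definition below_rel :: "'a set \<Rightarrow> ('a \<Rightarrow> 'a \<Rightarrow> bool) \<Rightarrow> 'a \<Rightarrow> 'a rel" where
  "below_rel T le t = {(x, y). x \<in> below T le t \<and> y \<in> below T le t \<and> le x y}"

definition same_level :: "'a set \<Rightarrow> ('a \<Rightarrow> 'a \<Rightarrow> bool) \<Rightarrow> 'a \<Rightarrow> 'a \<Rightarrow> bool" where
  "same_level T le s t \<longleftrightarrow> (below_rel T le s, below_rel T le t) \<in> ordIso"

definition level_of :: "'a set \<Rightarrow> ('a \<Rightarrow> 'a \<Rightarrow> bool) \<Rightarrow> 'a \<Rightarrow> 'a set" where
  "level_of T le t = {s \<in> T. same_level T le s t}"

definition is_chain :: "'a set \<Rightarrow> ('a \<Rightarrow> 'a \<Rightarrow> bool) \<Rightarrow> 'a set \<Rightarrow> bool" where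
  "is_chain T le C \<longleftrightarrow> C \<subseteq> T \<and> (\<forall>x\<in>C. \<forall>y\<in>C. le x y \<or> le y x)"

definition is_branch :: "'a set \<Rightarrow> ('a \<Rightarrow> 'a \<Rightarrow> bool) \<Rightarrow> 'a set \<Rightarrow> bool" where
  "is_branch T le C \<longleftrightarrow> is_chain T le C \<and> (\<forall>D. is_chain T le D \<and> C \<subseteq> D \<longrightarrow> D = C)"

definition aronszajn_tree :: "'a set \<Rightarrow> ('a \<Rightarrow> 'a \<Rightarrow> bool) \<Rightarrow> bool" where
  "aronszajn_tree T le \<longleftrightarrow> order_tree T le \<and> has_card_aleph1 T \<and>
     (\<forall>C. is_branch T le C \<longrightarrow> countable C) \<and>
     (\<forall>t\<in>T. countable (level_of T le t))"

definition is_pred :: "'a set \<Rightarrow> ('a \<Rightarrow> 'a \<Rightarrow> bool) \<Rightarrow> 'a \<Rightarrow> 'a \<Rightarrow> bool" where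
  "is_pred T le p t \<longleftrightarrow> p \<in> T \<and> t \<in> T \<and> tlt le p t \<and> \<not> (\<exists>s\<in>T. tlt le p s \<and> tlt le s t)"

definition is_root :: "'a set \<Rightarrow> ('a \<Rightarrow> 'a \<Rightarrow> bool) \<Rightarrow> 'a \<Rightarrow> bool" where
  "is_root T le r \<longleftrightarrow> r \<in> T \<and> \<not> (\<exists>s\<in>T. tlt le s r)"

definition is_limit :: "'a set \<Rightarrow> ('a \<Rightarrow> 'a \<Rightarrow> bool) \<Rightarrow> 'a \<Rightarrow> bool" where
  "is_limit T le t \<longleftrightarrow> t \<in> T \<and> \<not> (\<exists>p. is_pred T le p t)"

definition down_nbrs :: "'a set \<Rightarrow> ('a \<Rightarrow> 'a \<Rightarrow> bool) \<Rightarrow> ('a \<Rightarrow> 'a \<Rightarrow> bool) \<Rightarrow> 'a \<Rightarrow> 'a set" where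
  "down_nbrs T le G t = {s \<in> T. tlt le s t \<and> G s t}"

definition T_graph :: "'a set \<Rightarrow> ('a \<Rightarrow> 'a \<Rightarrow> bool) \<Rightarrow> ('a \<Rightarrow> 'a \<Rightarrow> bool) \<Rightarrow> bool" where
  "T_graph T le G \<longleftrightarrow>
     (\<forall>x y. G x y \<longrightarrow> x \<in> T \<and> y \<in> T) \<and>
     (\<forall>x y. G x y \<longrightarrow> G y x) \<and> (\<forall>x. \<not> G x x) \<and>
     (\<forall>x y. G x y \<longrightarrow> le x y \<or> le y x) \<and>
     (\<forall>t\<in>T. \<forall>s\<in>below T le t. \<exists>u\<in>down_nbrs T le G t. le s u)"

definition order_type_omega :: "'a set \<Rightarrow> ('a \<Rightarrow> 'a \<Rightarrow> bool) \<Rightarrow> 'a set \<Rightarrow> bool" where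
  "order_type_omega T le D \<longleftrightarrow> is_chain T le D \<and> infinite D \<and>
     (\<forall>d\<in>D. finite {e \<in> D. tlt le e d})"

text \<open>Sparseness for trees of height at most omega_1.\<close>
definition sparse_T_graph :: "'a set \<Rightarrow> ('a \<Rightarrow> 'a \<Rightarrow> bool) \<Rightarrow> ('a \<Rightarrow> 'a \<Rightarrow> bool) \<Rightarrow> bool" where
  "sparse_T_graph T le G \<longleftrightarrow> T_graph T le G \<and>
     (\<forall>t\<in>T. \<forall>p. is_pred T le p t \<longrightarrow> down_nbrs T le G t = {p}) \<and>
     (\<forall>t\<in>T. is_limit T le t \<and> \<not> is_root T le t \<longrightarrow> order_type_omega T le (down_nbrs T le G t))"

text \<open>The n-th down-neighbour t_n of a limit t (counting from 0 in increasing order).\<close>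
definition nth_down_nbr :: "'a set \<Rightarrow> ('a \<Rightarrow> 'a \<Rightarrow> bool) \<Rightarrow> ('a \<Rightarrow> 'a \<Rightarrow> bool) \<Rightarrow> 'a \<Rightarrow> nat \<Rightarrow> 'a" where
  "nth_down_nbr T le G t n =
     (THE s. s \<in> down_nbrs T le G t \<and> card {e \<in> down_nbrs T le G t. tlt le e s} = n)"

definition inflation_base :: "'a set \<Rightarrow> ('a \<Rightarrow> 'a \<Rightarrow> bool) \<Rightarrow> ('a \<Rightarrow> 'a \<Rightarrow> bool) \<Rightarrow>
    'a \<times> nat \<Rightarrow> 'a \<times> nat \<Rightarrow> bool" where
  "inflation_base T le G x y \<longleftrightarrow>
     (\<exists>t n. t \<in> T \<and> x = (t, n) \<and> y = (t, Suc n)) \<or>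
     (\<exists>t t' n. is_pred T le t' t \<and> x = (t, n) \<and> y = (t', n)) \<or>
     (\<exists>t n. is_limit T le t \<and> \<not> is_root T le t \<and> x = (t, n) \<and> y = (nth_down_nbr T le G t n, n))"

definition ray_inflation :: "'a set \<Rightarrow> ('a \<Rightarrow> 'a \<Rightarrow> bool) \<Rightarrow> ('a \<Rightarrow> 'a \<Rightarrow> bool) \<Rightarrow>
    'a \<times> nat \<Rightarrow> 'a \<times> nat \<Rightarrow> bool" where
  "ray_inflation T le G x y \<longleftrightarrow> inflation_base T le G x y \<or> inflation_base T le G y x"

definition is_path :: "'v set \<Rightarrow> ('v \<Rightarrow> 'v \<Rightarrow> bool) \<Rightarrow> 'v list \<Rightarrow> bool" where
  "is_path V adj p \<longleftrightarrow> p \<noteq> [] \<and> distinct p \<and> set p \<subseteq> V \<and>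
     (\<forall>i. Suc i < length p \<longrightarrow> adj (p ! i) (p ! Suc i))"

definition is_ray :: "'v set \<Rightarrow> ('v \<Rightarrow> 'v \<Rightarrow> bool) \<Rightarrow> (nat \<Rightarrow> 'v) \<Rightarrow> bool" where
  "is_ray V adj r \<longleftrightarrow> inj r \<and> range r \<subseteq> V \<and> (\<forall>n. adj (r n) (r (Suc n)))"

definition AB_path :: "'v set \<Rightarrow> ('v \<Rightarrow> 'v \<Rightarrow> bool) \<Rightarrow> 'v set \<Rightarrow> 'v set \<Rightarrow> 'v list \<Rightarrow> bool" where
  "AB_path V adj A B p \<longleftrightarrow> is_path V adj p \<and> set p \<inter> A = {hd p} \<and> set p \<inter> B = {last p}"

definition disjoint_paths :: "'v list set \<Rightarrow> bool" where
  "disjoint_paths P \<longleftrightarrow> (\<forall>p\<in>P. \<forall>q\<in>P. p \<noteq> q \<longrightarrow> set p \<inter> set q = {})"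

definition rays_equiv :: "'v set \<Rightarrow> ('v \<Rightarrow> 'v \<Rightarrow> bool) \<Rightarrow> (nat \<Rightarrow> 'v) \<Rightarrow> (nat \<Rightarrow> 'v) \<Rightarrow> bool" where
  "rays_equiv V adj R S \<longleftrightarrow> is_ray V adj R \<and> is_ray V adj S \<and>
     (\<exists>P. infinite P \<and> disjoint_paths P \<and> (\<forall>p\<in>P. AB_path V adj (range R) (range S) p))"

definition is_end :: "'v set \<Rightarrow> ('v \<Rightarrow> 'v \<Rightarrow> bool) \<Rightarrow> (nat \<Rightarrow> 'v) set \<Rightarrow> bool" where
  "is_end V adj \<epsilon> \<longleftrightarrow> (\<exists>R. is_ray V adj R \<and> \<epsilon> = {S. rays_equiv V adj R S})"

definition disjoint_rays :: "'v set \<Rightarrow> ('v \<Rightarrow> 'v \<Rightarrow> bool) \<Rightarrow> (nat \<Rightarrow> 'v) set \<Rightarrow> bool" where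
  "disjoint_rays V adj \<R> \<longleftrightarrow> (\<forall>R\<in>\<R>. is_ray V adj R) \<and>
     (\<forall>R\<in>\<R>. \<forall>S\<in>\<R>. R \<noteq> S \<longrightarrow> range R \<inter> range S = {})"

definition end_degree_aleph1 :: "'v set \<Rightarrow> ('v \<Rightarrow> 'v \<Rightarrow> bool) \<Rightarrow> (nat \<Rightarrow> 'v) set \<Rightarrow> bool" where
  "end_degree_aleph1 V adj \<epsilon> \<longleftrightarrow>
     (\<exists>\<R>. \<R> \<subseteq> \<epsilon> \<and> disjoint_rays V adj \<R> \<and> has_card_aleph1 \<R>) \<and>
     (\<forall>\<R>. \<R> \<subseteq> \<epsilon> \<and> disjoint_rays V adj \<R> \<longrightarrow> card_le_aleph1 \<R>)"

definition inner_vertices :: "'v list \<Rightarrow> 'v set" where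
  "inner_vertices p = set (butlast (tl p))"

definition independent_paths :: "'v list set \<Rightarrow> bool" where
  "independent_paths P \<longleftrightarrow> (\<forall>p\<in>P. \<forall>q\<in>P. p \<noteq> q \<longrightarrow> inner_vertices p \<inter> set q = {})"

definition is_ray_graph :: "'v set \<Rightarrow> ('v \<Rightarrow> 'v \<Rightarrow> bool) \<Rightarrow> (nat \<Rightarrow> 'v) set \<Rightarrow>
    ((nat \<Rightarrow> 'v) \<times> (nat \<Rightarrow> 'v)) set \<Rightarrow> bool" where
  "is_ray_graph V adj \<R> H \<longleftrightarrow>
     H \<subseteq> \<R> \<times> \<R> \<and> sym H \<and> (\<forall>R. (R, R) \<notin> H) \<and>
     (\<exists>P. (\<forall>p\<in>P. is_path V adj p \<and> set p \<inter> (\<Union>R\<in>\<R>. range R) = {hd p, last p}) \<and>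
          independent_paths P \<and>
          (\<forall>(R, S)\<in>H. \<exists>Q\<subseteq>P. infinite Q \<and> disjoint_paths Q \<and>
              (\<forall>q\<in>Q. (hd q \<in> range R \<and> last q \<in> range S) \<or> (hd q \<in> range S \<and> last q \<in> range R))))"

definition connected_on :: "'b set \<Rightarrow> ('b \<times> 'b) set \<Rightarrow> bool" where
  "connected_on X H \<longleftrightarrow> X \<noteq> {} \<and> (\<forall>x\<in>X. \<forall>y\<in>X. (x, y) \<in> H\<^sup>*)"

definition admits_connected_ray_graph :: "'v set \<Rightarrow> ('v \<Rightarrow> 'v \<Rightarrow> bool) \<Rightarrow> (nat \<Rightarrow> 'v) set \<Rightarrow> bool" where
  "admits_connected_ray_graph V adj \<R> \<longleftrightarrow>
     (\<exists>H. is_ray_graph V adj \<R> H \<and> connected_on \<R> H)"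

end

(*
  The end is that of the vertical rays {t} x N: on every layer T x {n} the inflation contains a
  copy of the T-graph, which joins each point to the root, so these aleph_1 disjoint rays are
  all equivalent, and no end has more since there are only aleph_1 vertices.

  In a ray graph on aleph_1 disjoint rays of this end, every ray S has only countably many
  neighbours, so the ray graph is not connected. Indeed, the points of T all of whose strict
  predecessors lie below a point of S form a countable set D, because branches and levels of T
  are countable, and only countably many of the disjoint rays meet D x N. Any other ray R lies
  in the cone above a minimal point u outside D, while S lies outside that cone. Sparseness,
  u not in D and the finiteness hypothesis leave only finitely many edges from S into the cone,
  so among infinitely many disjoint S--R paths one enters the cone from an inner vertex in D x N;
  by independence of the paths of the ray graph, that vertex determines R.
*)

theory Submission
  imports Defs
begin

unbundle cardinal_syntax

section \<open>Paths, rays and ray graphs\<close>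

lemma list_change_point:
  assumes "xs \<noteq> []" and "P (hd xs) \<noteq> P (last xs)"
  shows "\<exists>i. Suc i < length xs \<and> P (xs ! i) \<noteq> P (xs ! Suc i)"
  using assms
proof (induction xs rule: list_nonempty_induct)
  case (single x)
  then show ?case by simp
next
  case (cons x xs)
  show ?case
  proof (cases "P x = P (hd xs)")
    case True
    then obtain i where "Suc i < length xs" "P (xs ! i) \<noteq> P (xs ! Suc i)"
      using cons by auto
    then show ?thesis
      by (intro exI[of _ "Suc i"]) simp
  next
    case False
    then show ?thesis
      using cons.hyps by (intro exI[of _ 0]) (simp add: hd_conv_nth)
  qed
qed

lemma inner_vertices_subset: "inner_vertices q \<subseteq> set q"
  unfolding inner_vertices_def by (cases q) (auto dest: in_set_butlastD)

lemma inner_verticesI: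
  assumes "x \<in> set q" and "x \<noteq> hd q" and "x \<noteq> last q"
  shows "x \<in> inner_vertices q"
proof -
  obtain a q' where q: "q = a # q'"
    using assms(1) by (cases q) auto
  with assms have "q' \<noteq> []" "x \<in> set q'" "x \<noteq> last q'"
    by (auto split: if_splits)
  then have "x \<in> set (butlast q' @ [last q'])"
    by simp
  with \<open>x \<noteq> last q'\<close> show ?thesis
    unfolding inner_vertices_def q by simp
qed

lemma is_path_snoc:
  assumes "is_path V adj p" and "y \<in> V" "y \<notin> set p" and "adj (last p) y"
  shows "is_path V adj (p @ [y])"
  unfolding is_path_def
proof (intro conjI allI impI)
  fix i assume i: "Suc i < length (p @ [y])"
  show "adj ((p @ [y]) ! i) ((p @ [y]) ! Suc i)"
  proof (cases "Suc i < length p")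
    case True
    then show ?thesis
      using assms(1) unfolding is_path_def by (simp add: nth_append)
  next
    case False
    with i have "i = length p - 1" and "p \<noteq> []"
      using assms(1) unfolding is_path_def by auto
    then show ?thesis
      using assms(4) by (simp add: nth_append last_conv_nth)
  qed
qed (use assms in \<open>auto simp: is_path_def\<close>)

lemma is_ray_in_vertices: "is_ray V adj R \<Longrightarrow> R k \<in> V"
  unfolding is_ray_def by blast

lemma path_crosses_into:
  assumes "is_path V adj q" and "\<And>x y. adj x y \<Longrightarrow> adj y x"
    and "P (hd q) \<noteq> P (last q)"
  shows "\<exists>x\<in>set q. \<exists>y\<in>set q. adj x y \<and> \<not> P x \<and> P y"
proof -
  have "q \<noteq> []" and steps: "\<And>i. Suc i < length q \<Longrightarrow> adj (q ! i) (q ! Suc i)"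
    using assms(1) unfolding is_path_def by auto
  then obtain i where i: "Suc i < length q" "P (q ! i) \<noteq> P (q ! Suc i)"
    using list_change_point[of q P] assms(3) by blast
  have mem: "q ! i \<in> set q" "q ! Suc i \<in> set q"
    using i(1) by auto
  have edge: "adj (q ! i) (q ! Suc i)" "adj (q ! Suc i) (q ! i)"
    using steps[OF i(1)] assms(2) by blast+
  show ?thesis
  proof (cases "P (q ! i)")
    case True
    then show ?thesis
      using i(2) mem edge(2) by blast
  next
    case False
    then show ?thesis
      using i(2) mem edge(1) by blast
  qed
qed

lemma disjoint_family_meeting_inj:
  assumes disj: "\<And>x y. x \<in> X \<Longrightarrow> y \<in> X \<Longrightarrow> x \<noteq> y \<Longrightarrow> f x \<inter> f y = {}"
    and hit: "\<And>x. x \<in> X \<Longrightarrow> f x \<inter> W \<noteq> {}"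
  obtains g where "inj_on g X" and "g ` X \<subseteq> W"
proof -
  have "\<forall>x\<in>X. \<exists>w. w \<in> f x \<inter> W"
    using hit by blast
  then obtain g where g: "\<And>x. x \<in> X \<Longrightarrow> g x \<in> f x \<inter> W"
    by metis
  have "inj_on g X"
  proof (rule inj_onI, rule ccontr)
    fix x y assume "x \<in> X" "y \<in> X" "g x = g y" "x \<noteq> y"
    then show False
      using g disj by (metis IntD1 disjoint_iff)
  qed
  moreover have "g ` X \<subseteq> W"
    using g by blast
  ultimately show thesis
    by (rule that)
qed

lemma countable_disjoint_family_meeting:
  assumes "\<And>x y. x \<in> X \<Longrightarrow> y \<in> X \<Longrightarrow> x \<noteq> y \<Longrightarrow> f x \<inter> f y = {}"
    and "countable W" and "\<And>x. x \<in> X \<Longrightarrow> f x \<inter> W \<noteq> {}"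
  shows "countable X"
proof -
  obtain g where "inj_on g X" and "g ` X \<subseteq> W"
    using disjoint_family_meeting_inj[of X f W] assms(1,3) by blast
  then show ?thesis
    using countable_image_inj_on countable_subset[OF _ assms(2)] by blast
qed

lemma disjoint_paths_avoid_finite:
  assumes "infinite Q" and "disjoint_paths Q" and "finite F"
  obtains q where "q \<in> Q" and "set q \<inter> F = {}"
proof -
  have "\<not> (\<forall>q\<in>Q. set q \<inter> F \<noteq> {})"
  proof
    assume "\<forall>q\<in>Q. set q \<inter> F \<noteq> {}"
    then obtain g where "inj_on g Q" and "g ` Q \<subseteq> F"
      using disjoint_family_meeting_inj[of Q set F] assms(2) unfolding disjoint_paths_def by blast
    then show False
      using assms(1,3) finite_imageD finite_subset by blast
  qed
  then show thesis
    using that by blast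
qed

definition joins :: "'v list \<Rightarrow> (nat \<Rightarrow> 'v) \<Rightarrow> (nat \<Rightarrow> 'v) \<Rightarrow> bool" where
  "joins q R S \<longleftrightarrow> (hd q \<in> range R \<and> last q \<in> range S) \<or> (hd q \<in> range S \<and> last q \<in> range R)"

lemma is_ray_graphE:
  assumes "is_ray_graph V adj \<R> H"
  obtains P where "H \<subseteq> \<R> \<times> \<R>" and "\<And>R. (R, R) \<notin> H"
    and "\<And>p. p \<in> P \<Longrightarrow> is_path V adj p" and "independent_paths P"
    and "\<And>R S. (R, S) \<in> H \<Longrightarrow> \<exists>Q\<subseteq>P. infinite Q \<and> disjoint_paths Q \<and> (\<forall>q\<in>Q. joins q R S)"
proof -
  from assms obtain P where "H \<subseteq> \<R> \<times> \<R>" "\<forall>R. (R, R) \<notin> H" "\<forall>p\<in>P. is_path V adj p"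
    "independent_paths P"
    "\<forall>(R, S)\<in>H. \<exists>Q\<subseteq>P. infinite Q \<and> disjoint_paths Q \<and> (\<forall>q\<in>Q. joins q R S)"
    unfolding is_ray_graph_def joins_def by auto
  then show thesis
    by (intro that) auto
qed

lemma disjoint_raysD:
  assumes "disjoint_rays V adj \<R>"
  shows "\<And>R. R \<in> \<R> \<Longrightarrow> is_ray V adj R"
    and "\<And>R S. R \<in> \<R> \<Longrightarrow> S \<in> \<R> \<Longrightarrow> R \<noteq> S \<Longrightarrow> range R \<inter> range S = {}"
  using assms unfolding disjoint_rays_def by blast+

lemma disjoint_rays_card_of_le:
  assumes "disjoint_rays V adj \<R>"
  shows "|\<R>| \<le>o |V|"
proof -
  have "inj_on (\<lambda>R. R 0) \<R>"
  proof (rule inj_onI, rule ccontr)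
    fix R S assume "R \<in> \<R>" "S \<in> \<R>" "R 0 = S 0" "R \<noteq> S"
    moreover have "R 0 \<in> range R" "S 0 \<in> range S"
      by simp_all
    ultimately show False
      using disjoint_raysD(2)[OF assms] by (metis disjoint_iff)
  qed
  moreover have "(\<lambda>R. R 0) ` \<R> \<subseteq> V"
    using disjoint_raysD(1)[OF assms] unfolding is_ray_def by blast
  ultimately show ?thesis
    using card_of_ordLeq by blast
qed

lemma joins_determines_other_ray:
  assumes "disjoint_rays V adj \<R>" and "R \<in> \<R>" "R' \<in> \<R>" "S \<in> \<R>" and "R \<noteq> S" "R' \<noteq> S"
    and "joins q R S" "joins q R' S"
  shows "R = R'"
proof (rule ccontr)
  assume "R \<noteq> R'"
  then have "range R \<inter> range R' = {}" "range R \<inter> range S = {}" "range R' \<inter> range S = {}"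
    using assms(2-6) disjoint_raysD(2)[OF assms(1)] by simp_all
  then show False
    using assms(7,8) unfolding joins_def by blast
qed

lemma joins_commute: "joins q R S \<longleftrightarrow> joins q S R"
  unfolding joins_def by blast

lemma countable_rays_meeting:
  assumes "disjoint_rays V adj \<R>" and "countable W"
  shows "countable {R \<in> \<R>. range R \<inter> W \<noteq> {}}"
  using disjoint_raysD(2)[OF assms(1)]
  by (rule countable_disjoint_family_meeting[of _ range, OF _ assms(2)]) auto

lemma countable_independent_paths_meeting:
  assumes "independent_paths P" and "countable W"
  shows "countable {q \<in> P. inner_vertices q \<inter> W \<noteq> {}}"
proof (rule countable_disjoint_family_meeting[of _ inner_vertices, OF _ assms(2)])
  fix p q assume "p \<in> {q \<in> P. inner_vertices q \<inter> W \<noteq> {}}" "q \<in> {q \<in> P. inner_vertices q \<inter> W \<noteq> {}}"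
    and "p \<noteq> q"
  then have "inner_vertices p \<inter> set q = {}"
    using assms(1) unfolding independent_paths_def by blast
  then show "inner_vertices p \<inter> inner_vertices q = {}"
    using inner_vertices_subset[of q] by blast
qed simp

text \<open>A neighbour of \<open>S\<close> avoiding \<open>W\<close> is determined by a linking path through \<open>W\<close>, and only
  countably many independent paths meet \<open>W\<close>.\<close>

lemma ray_graph_neighbours_countable:
  assumes disj: "disjoint_rays V adj \<R>" and rg: "is_ray_graph V adj \<R> H" and S: "S \<in> \<R>"
    and W: "countable W"
    and meet: "\<And>R Q. R \<in> \<R> \<Longrightarrow> range R \<inter> W = {} \<Longrightarrow> infinite Q \<Longrightarrow> disjoint_paths Q \<Longrightarrow>
       (\<And>q. q \<in> Q \<Longrightarrow> is_path V adj q \<and> joins q R S) \<Longrightarrow> \<exists>q\<in>Q. inner_vertices q \<inter> W \<noteq> {}"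
  shows "countable (H `` {S})"
proof -
  obtain P where H: "H \<subseteq> \<R> \<times> \<R>" "\<And>R. (R, R) \<notin> H"
    and paths: "\<And>p. p \<in> P \<Longrightarrow> is_path V adj p" and indep: "independent_paths P"
    and links: "\<And>R S. (R, S) \<in> H \<Longrightarrow> \<exists>Q\<subseteq>P. infinite Q \<and> disjoint_paths Q \<and> (\<forall>q\<in>Q. joins q R S)"
    using rg by (elim is_ray_graphE) blast
  define N where "N = {R \<in> H `` {S}. range R \<inter> W = {}}"
  have "\<exists>q\<in>P. joins q R S \<and> inner_vertices q \<inter> W \<noteq> {}" if "R \<in> N" for R
  proof -
    have SR: "(S, R) \<in> H" and R: "R \<in> \<R>" "range R \<inter> W = {}"
      using that H(1) unfolding N_def by auto
    obtain Q where "Q \<subseteq> P" "infinite Q" "disjoint_paths Q" "\<forall>q\<in>Q. joins q R S"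
      using links[OF SR] joins_commute by blast
    moreover from this obtain q where "q \<in> Q" "inner_vertices q \<inter> W \<noteq> {}"
      using meet[OF R, of Q] paths by blast
    ultimately show ?thesis
      by blast
  qed
  then obtain path where path: "\<And>R. R \<in> N \<Longrightarrow> path R \<in> P \<and> joins (path R) R S \<and>
      inner_vertices (path R) \<inter> W \<noteq> {}"
    by metis
  have "inj_on path N"
  proof (rule inj_onI)
    fix R R' assume R: "R \<in> N" and R': "R' \<in> N" and eq: "path R = path R'"
    have "R \<noteq> S" "R' \<noteq> S" "R \<in> \<R>" "R' \<in> \<R>"
      using R R' H unfolding N_def by auto
    moreover have "joins (path R) R S" "joins (path R) R' S"
      using path[OF R] path[OF R'] eq by auto
    ultimately show "R = R'"
      by (intro joins_determines_other_ray[OF disj _ _ S])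
  qed
  moreover have "countable (path ` N)"
    using countable_independent_paths_meeting[OF indep W]
    by (rule countable_subset[rotated]) (use path in blast)
  ultimately have "countable N"
    using countable_image_inj_on by blast
  moreover have "countable {R \<in> \<R>. range R \<inter> W \<noteq> {}}"
    using countable_rays_meeting[OF disj W] .
  moreover have "H `` {S} \<subseteq> N \<union> {R \<in> \<R>. range R \<inter> W \<noteq> {}}"
    using H(1) unfolding N_def by blast
  ultimately show ?thesis
    by (meson countable_Un countable_subset)
qed

lemma connected_on_countable:
  assumes "connected_on X H" and "\<And>x. countable (H `` {x})"
  shows "countable X"
proof -
  obtain x where "x \<in> X" and "X \<subseteq> H\<^sup>* `` {x}"
    using assms(1) unfolding connected_on_def by blast
  moreover have "countable (H\<^sup>* `` {x})"
  proof (rule countable_rtrancl)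
    show "countable (H `` Y)" if "countable Y" for Y
      using countable_Image[of Y H] assms(2) that by blast
  qed simp
  ultimately show ?thesis
    using countable_subset by blast
qed

section \<open>Order trees\<close>

lemma chain_extends_to_branch:
  assumes "is_chain T le C"
  obtains B where "is_branch T le B" and "C \<subseteq> B"
proof -
  let ?A = "{Y. is_chain T le Y \<and> C \<subseteq> Y}"
  have union: "\<Union>\<C> \<in> ?A" if "\<C> \<noteq> {}" and "subset.chain ?A \<C>" for \<C>
  proof -
    have mem: "\<C> \<subseteq> ?A" and lin: "\<And>X Y. X \<in> \<C> \<Longrightarrow> Y \<in> \<C> \<Longrightarrow> X \<subseteq> Y \<or> Y \<subseteq> X"
      using \<open>subset.chain ?A \<C>\<close> unfolding subset_chain_def by blast+
    have "le x y \<or> le y x" if "x \<in> X" "y \<in> Y" "X \<in> \<C>" "Y \<in> \<C>" for x y X Y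
      using lin[OF that(3,4)]
    proof
      assume "X \<subseteq> Y"
      then show ?thesis
        using that mem unfolding is_chain_def by blast
    next
      assume "Y \<subseteq> X"
      then show ?thesis
        using that mem unfolding is_chain_def by blast
    qed
    moreover have "\<Union>\<C> \<subseteq> T" and "C \<subseteq> \<Union>\<C>"
      using mem \<open>\<C> \<noteq> {}\<close> unfolding is_chain_def by blast+
    ultimately show ?thesis
      unfolding is_chain_def by blast
  qed
  have "?A \<noteq> {}"
    using assms by blast
  from subset_Zorn_nonempty[OF this union]
  obtain B where B: "is_chain T le B" "C \<subseteq> B" and max: "\<forall>X\<in>?A. B \<subseteq> X \<longrightarrow> X = B"
    by blast
  have "is_branch T le B"
    unfolding is_branch_def
  proof (intro conjI allI impI)
    fix D assume "is_chain T le D \<and> B \<subseteq> D"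
    with B(2) have "D \<in> ?A" "B \<subseteq> D"
      by auto
    with max show "D = B"
      by blast
  qed (fact B(1))
  then show thesis
    using B(2) by (rule that)
qed

locale tree =
  fixes T :: "'a set" and le :: "'a \<Rightarrow> 'a \<Rightarrow> bool"
  assumes order_tree: "order_tree T le"
begin

lemma tree_refl: "x \<in> T \<Longrightarrow> le x x"
  using order_tree[unfolded order_tree_def, THEN conjunct1] by blast

lemma tree_antisym: "x \<in> T \<Longrightarrow> y \<in> T \<Longrightarrow> le x y \<Longrightarrow> le y x \<Longrightarrow> x = y"
  using order_tree[unfolded order_tree_def, THEN conjunct2, THEN conjunct1] by blast

lemma tree_trans: "x \<in> T \<Longrightarrow> y \<in> T \<Longrightarrow> z \<in> T \<Longrightarrow> le x y \<Longrightarrow> le y z \<Longrightarrow> le x z"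
  using order_tree[unfolded order_tree_def, THEN conjunct2, THEN conjunct2, THEN conjunct1] by blast

lemma tree_comparable: "t \<in> T \<Longrightarrow> x \<in> T \<Longrightarrow> y \<in> T \<Longrightarrow> le x t \<Longrightarrow> le y t \<Longrightarrow> le x y \<or> le y x"
  using order_tree[unfolded order_tree_def, THEN conjunct2, THEN conjunct2, THEN conjunct2,
      THEN conjunct2]
  unfolding down_closed_def by blast

lemma down_closed_has_least:
  "t \<in> T \<Longrightarrow> A \<subseteq> down_closed T le t \<Longrightarrow> A \<noteq> {} \<Longrightarrow> \<exists>m\<in>A. \<forall>a\<in>A. le m a"
  using order_tree[unfolded order_tree_def, THEN conjunct2, THEN conjunct2, THEN conjunct2,
      THEN conjunct2] by blast

lemma tlt_trans: "x \<in> T \<Longrightarrow> y \<in> T \<Longrightarrow> z \<in> T \<Longrightarrow> tlt le x y \<Longrightarrow> tlt le y z \<Longrightarrow> tlt le x z"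
  unfolding tlt_def using tree_trans tree_antisym by blast

lemma tlt_le_trans: "x \<in> T \<Longrightarrow> y \<in> T \<Longrightarrow> z \<in> T \<Longrightarrow> tlt le x y \<Longrightarrow> le y z \<Longrightarrow> tlt le x z"
  unfolding tlt_def using tree_trans tree_antisym by blast

lemma tlt_not_le: "x \<in> T \<Longrightarrow> y \<in> T \<Longrightarrow> tlt le x y \<Longrightarrow> \<not> le y x"
  unfolding tlt_def using tree_antisym by blast

lemma down_closed_is_chain: "t \<in> T \<Longrightarrow> is_chain T le (down_closed T le t)"
  using tree_comparable unfolding is_chain_def down_closed_def by blast

lemma minimal_outside:
  assumes "t \<in> T" and "t \<notin> D"
  obtains u where "u \<in> T" "le u t" "u \<notin> D" "below T le u \<subseteq> D"
proof -
  let ?A = "{s \<in> down_closed T le t. s \<notin> D}"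
  have "t \<in> ?A"
    using assms tree_refl unfolding down_closed_def by blast
  then obtain u where u: "u \<in> ?A" and least: "\<forall>a\<in>?A. le u a"
    using down_closed_has_least[OF assms(1), of ?A] by blast
  then have "u \<in> T" "le u t"
    unfolding down_closed_def by auto
  have "x \<in> D" if "x \<in> below T le u" for x
  proof (rule ccontr)
    assume "x \<notin> D"
    have "x \<in> T" "tlt le x u"
      using that unfolding below_def by auto
    then have "x \<in> ?A"
      using \<open>x \<notin> D\<close> \<open>u \<in> T\<close> \<open>le u t\<close> assms(1) tree_trans unfolding down_closed_def tlt_def by blast
    then show False
      using least tlt_not_le[OF \<open>x \<in> T\<close> \<open>u \<in> T\<close> \<open>tlt le x u\<close>] by blast
  qed
  then show thesis
    using that \<open>u \<in> T\<close> \<open>le u t\<close> u by blast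
qed

lemma wf_tlt: "wf {(s, t). s \<in> T \<and> t \<in> T \<and> tlt le s t}"
proof (rule wfI_min)
  fix x :: 'a and Q assume "x \<in> Q"
  show "\<exists>z\<in>Q. \<forall>y. (y, z) \<in> {(s, t). s \<in> T \<and> t \<in> T \<and> tlt le s t} \<longrightarrow> y \<notin> Q"
  proof (cases "x \<in> T")
    case True
    then obtain u where "u \<in> T" "le u x" "u \<in> Q" "below T le u \<subseteq> - Q"
      using minimal_outside[of x "- Q"] \<open>x \<in> Q\<close> by blast
    then show ?thesis
      unfolding below_def by blast
  qed (use \<open>x \<in> Q\<close> in blast)
qed

lemma tlt_induct [consumes 1, case_names less]:
  assumes "t \<in> T" and "\<And>t. t \<in> T \<Longrightarrow> (\<And>s. s \<in> T \<Longrightarrow> tlt le s t \<Longrightarrow> P s) \<Longrightarrow> P t"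
  shows "P t"
  using wf_tlt assms(1)
  by (induction t rule: wf_induct_rule) (use assms(2) in blast)

definition root :: 'a where
  "root = (THE r. is_root T le r)"

lemma is_root_iff: "is_root T le t \<longleftrightarrow> t = root"
proof -
  have "\<exists>!r. is_root T le r"
    using order_tree[unfolded order_tree_def, THEN conjunct2, THEN conjunct2, THEN conjunct2,
      THEN conjunct1]
    unfolding is_root_def .
  then show ?thesis
    unfolding root_def using theI' by metis
qed

lemma root_in_T: "root \<in> T"
  using is_root_iff unfolding is_root_def by blast

lemma Field_below_rel: "Field (below_rel T le t) = below T le t"
  unfolding below_rel_def Field_def below_def using tree_refl by blast

lemma well_order_below_rel:
  assumes "t \<in> T"
  shows "Well_order (below_rel T le t)"
proof -
  let ?r = "below_rel T le t" and ?B = "below T le t"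
  have "?B \<subseteq> T"
    unfolding below_def by blast
  have "?r \<subseteq> ?B \<times> ?B"
    unfolding below_rel_def by blast
  moreover have "refl_on ?B ?r"
    unfolding refl_on_def below_rel_def using \<open>?B \<subseteq> T\<close> tree_refl by blast
  moreover have "Relation.trans ?r"
    unfolding below_rel_def using \<open>?B \<subseteq> T\<close> tree_trans by (intro transI) blast
  moreover have "antisym ?r"
    unfolding below_rel_def using \<open>?B \<subseteq> T\<close> tree_antisym by (intro antisymI) blast
  moreover have "total_on ?B ?r"
    unfolding total_on_def below_rel_def below_def tlt_def using assms tree_comparable by blast
  moreover have "?r - Id \<subseteq> {(s, t). s \<in> T \<and> t \<in> T \<and> tlt le s t}"
    unfolding below_rel_def below_def tlt_def by blast
  then have "wf (?r - Id)"
    using wf_subset[OF wf_tlt] by blast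
  ultimately show ?thesis
    unfolding well_order_on_def linear_order_on_def partial_order_on_def preorder_on_def
      Field_below_rel by blast
qed

lemma below_rel_restrict_underS:
  assumes "t \<in> T" and "e \<in> below T le t"
  shows "Restr (below_rel T le t) (underS (below_rel T le t) e) = below_rel T le e"
proof -
  have "below T le e \<subseteq> below T le t"
    using assms tlt_trans unfolding below_def by blast
  moreover have "underS (below_rel T le t) e = below T le e"
    using assms \<open>below T le e \<subseteq> below T le t\<close>
    unfolding underS_def below_rel_def below_def tlt_def by blast
  ultimately show ?thesis
    unfolding below_rel_def by blast
qed

lemma same_level_as_below:
  assumes "u \<in> T" "u' \<in> T" and "below_rel T le u <o below_rel T le u'"
  obtains e where "e \<in> below T le u'" and "same_level T le u e"
proof -
  obtain e where "e \<in> Field (below_rel T le u')"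
    and "below_rel T le u =o Restr (below_rel T le u') (underS (below_rel T le u') e)"
    using assms(3) ordLess_iff_ordIso_Restr well_order_below_rel assms(1,2) by blast
  then show thesis
    using that below_rel_restrict_underS[OF assms(2)] unfolding Field_below_rel same_level_def
    by auto
qed

lemma same_level_if_not_shorter:
  assumes "u \<in> T" "v \<in> T"
    and "\<not> below_rel T le u <o below_rel T le v" "\<not> below_rel T le v <o below_rel T le u"
  shows "same_level T le u v"
  using assms ordLess_or_ordLeq well_order_below_rel ordIso_iff_ordLeq unfolding same_level_def
  by blast

lemma order_type_omega_rank_mono:
  assumes "order_type_omega T le D" and "x \<in> D" "y \<in> D" "tlt le x y"
  shows "card {e \<in> D. tlt le e x} < card {e \<in> D. tlt le e y}"
proof -
  have "D \<subseteq> T" and "finite {e \<in> D. tlt le e y}"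
    using assms(1,3) unfolding order_type_omega_def is_chain_def by auto
  have "{e \<in> D. tlt le e x} \<subseteq> {e \<in> D. tlt le e y}"
    using assms(2-4) \<open>D \<subseteq> T\<close> tlt_trans by blast
  moreover have "x \<in> {e \<in> D. tlt le e y} - {e \<in> D. tlt le e x}"
    using assms(2,4) unfolding tlt_def by simp
  ultimately have "{e \<in> D. tlt le e x} \<subset> {e \<in> D. tlt le e y}"
    by blast
  then show ?thesis
    using \<open>finite {e \<in> D. tlt le e y}\<close> psubset_card_mono by blast
qed

lemma order_type_omega_rank_inj:
  assumes "order_type_omega T le D"
  shows "inj_on (\<lambda>s. card {e \<in> D. tlt le e s}) D"
proof (rule inj_onI, rule ccontr)
  fix x y assume "x \<in> D" "y \<in> D" and eq: "card {e \<in> D. tlt le e x} = card {e \<in> D. tlt le e y}"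
    and "x \<noteq> y"
  then have "tlt le x y \<or> tlt le y x"
    using assms unfolding order_type_omega_def is_chain_def tlt_def by blast
  then show False
    using order_type_omega_rank_mono[OF assms] \<open>x \<in> D\<close> \<open>y \<in> D\<close> eq by fastforce
qed

text \<open>Ranking each element by the number of elements below it, the ranks of the elements up to
  \<open>d\<close> are exactly \<open>0, \<dots>, rank d\<close> by injectivity and counting, so every \<open>n\<close> is a rank.\<close>

lemma order_type_omega_nth:
  assumes "order_type_omega T le D"
  shows "\<exists>!s. s \<in> D \<and> card {e \<in> D. tlt le e s} = n"
proof -
  define rank where "rank s = card {e \<in> D. tlt le e s}" for s
  have inj: "inj_on rank D"
    unfolding rank_def by (rule order_type_omega_rank_inj[OF assms])
  have D: "D \<subseteq> T" "infinite D" "\<And>d. d \<in> D \<Longrightarrow> finite {e \<in> D. tlt le e d}"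
    using assms unfolding order_type_omega_def is_chain_def by auto
  have initial: "rank ` {e \<in> D. le e d} = {..rank d}" if "d \<in> D" for d
  proof (rule card_subset_eq)
    have "{e \<in> D. le e d} = insert d {e \<in> D. tlt le e d}"
      using that D(1) tree_refl unfolding tlt_def by blast
    then have "card {e \<in> D. le e d} = Suc (rank d)"
      unfolding rank_def using D(3)[OF that] by (simp add: tlt_def)
    moreover have "inj_on rank {e \<in> D. le e d}"
      using inj by (rule inj_on_subset) blast
    ultimately show "card (rank ` {e \<in> D. le e d}) = card {..rank d}"
      by (simp add: card_image)
    show "rank ` {e \<in> D. le e d} \<subseteq> {..rank d}"
    proof (rule image_subsetI)
      fix e assume "e \<in> {e \<in> D. le e d}"
      then have "e \<in> D" "e = d \<or> tlt le e d"
        unfolding tlt_def by auto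
      then show "rank e \<in> {..rank d}"
        using order_type_omega_rank_mono[OF assms, of e d] that unfolding rank_def by fastforce
    qed
  qed simp
  have "infinite (rank ` D)"
    using D(2) finite_imageD[OF _ inj] by blast
  then obtain d where "d \<in> D" and "n \<le> rank d"
    unfolding infinite_nat_iff_unbounded_le by blast
  then have "n \<in> rank ` {e \<in> D. le e d}"
    using initial by simp
  then obtain s where "s \<in> D" and "rank s = n"
    by blast
  show ?thesis
  proof (rule ex1I[of _ s])
    fix s' assume "s' \<in> D \<and> card {e \<in> D. tlt le e s'} = n"
    then show "s' = s"
      using \<open>s \<in> D\<close> \<open>rank s = n\<close> inj unfolding rank_def inj_on_def by auto
  qed (use \<open>s \<in> D\<close> \<open>rank s = n\<close> rank_def in simp)
qed

definition covered :: "'a set \<Rightarrow> 'a set" where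
  "covered C = {u \<in> T. below T le u \<subseteq> (\<Union>c\<in>C. down_closed T le c)}"

lemma subset_covered: "C \<subseteq> T \<Longrightarrow> C \<subseteq> covered C"
  unfolding covered_def below_def down_closed_def tlt_def by blast

lemma covered_down_closed: "u \<in> covered C \<Longrightarrow> v \<in> T \<Longrightarrow> le v u \<Longrightarrow> v \<in> covered C"
  unfolding covered_def below_def using tlt_le_trans by blast

lemma covered_if_pred:
  assumes "is_pred T le p u" and "p \<in> C"
  shows "u \<in> covered C"
proof -
  have "s \<in> down_closed T le p" if "s \<in> below T le u" for s
  proof -
    have "s \<in> T" "p \<in> T" "u \<in> T" "tlt le s u" "tlt le p u" "\<not> (\<exists>s\<in>T. tlt le p s \<and> tlt le s u)"
      using assms(1) that unfolding is_pred_def below_def by auto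
    then have "le s p \<or> le p s" "\<not> tlt le p s"
      using tree_comparable[of u s p] unfolding tlt_def by auto
    then have "le s p"
      using tree_refl[OF \<open>s \<in> T\<close>] unfolding tlt_def by auto
    with \<open>s \<in> T\<close> show ?thesis
      unfolding down_closed_def by blast
  qed
  then show ?thesis
    using assms unfolding covered_def is_pred_def by blast
qed

end

section \<open>Aronszajn trees\<close>

lemma has_card_aleph1_uncountable:
  assumes "has_card_aleph1 A"
  shows "uncountable A"
proof
  assume "countable A"
  then have "|A| \<le>o |UNIV :: nat set|"
    unfolding countable_def card_of_ordLeq[symmetric] by blast
  moreover have "|UNIV :: nat set| <o |A|"
    using assms cardSuc_greater[OF card_of_Card_order] ordLess_ordIso_trans ordIso_symmetric
    unfolding has_card_aleph1_def by blast
  ultimately show False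
    using not_ordLess_ordLeq by blast
qed

locale aronszajn =
  fixes T :: "'a set" and le :: "'a \<Rightarrow> 'a \<Rightarrow> bool"
  assumes aronszajn_tree: "aronszajn_tree T le"

sublocale aronszajn \<subseteq> tree
  using aronszajn_tree[unfolded aronszajn_tree_def, THEN conjunct1] by unfold_locales

context aronszajn
begin

lemma down_closed_countable:
  assumes "t \<in> T"
  shows "countable (down_closed T le t)"
proof -
  obtain B where "is_branch T le B" and "down_closed T le t \<subseteq> B"
    using chain_extends_to_branch[OF down_closed_is_chain[OF assms]] by blast
  moreover have "countable B" if "is_branch T le B" for B
    using aronszajn_tree that unfolding aronszajn_tree_def by blast
  ultimately show ?thesis
    using countable_subset by blast
qed

lemma level_countable: "t \<in> T \<Longrightarrow> countable (level_of T le t)"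
  using aronszajn_tree unfolding aronszajn_tree_def by blast

text \<open>The points of maximal height among them all lie on one level; every other one has
  the height of a point of \<open>E\<close>.\<close>

lemma countable_below_subset:
  assumes "countable E"
  shows "countable {u \<in> T. below T le u \<subseteq> E}"
proof -
  define U where "U = {u \<in> T. below T le u \<subseteq> E}"
  define M where "M = {u \<in> U. \<forall>u'\<in>U. \<not> below_rel T le u <o below_rel T le u'}"
  have "U \<subseteq> (\<Union>e\<in>E \<inter> T. level_of T le e) \<union> M"
  proof
    fix u assume "u \<in> U"
    show "u \<in> (\<Union>e\<in>E \<inter> T. level_of T le e) \<union> M"
    proof (cases "u \<in> M")
      case False
      with \<open>u \<in> U\<close> obtain u' where "u' \<in> U" and "below_rel T le u <o below_rel T le u'"
        unfolding M_def by blast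
      then obtain e where "e \<in> below T le u'" and "same_level T le u e"
        using same_level_as_below \<open>u \<in> U\<close> unfolding U_def by blast
      then have "e \<in> E \<inter> T" and "u \<in> level_of T le e"
        using \<open>u \<in> U\<close> \<open>u' \<in> U\<close> unfolding U_def level_of_def below_def by auto
      then show ?thesis
        by blast
    qed simp
  qed
  moreover have "countable M"
  proof (cases "M = {}")
    case False
    then obtain m where "m \<in> M"
      by blast
    have "M \<subseteq> level_of T le m"
    proof
      fix u assume "u \<in> M"
      then have "u \<in> T" and "same_level T le u m"
        using \<open>m \<in> M\<close> same_level_if_not_shorter unfolding M_def U_def by auto
      then show "u \<in> level_of T le m"
        unfolding level_of_def by blast
    qed
    moreover have "m \<in> T"
      using \<open>m \<in> M\<close> unfolding M_def U_def by blast
    ultimately show ?thesis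
      using level_countable countable_subset by blast
  qed simp
  moreover have "countable (\<Union>e\<in>E \<inter> T. level_of T le e)"
    using assms level_countable by (intro countable_UN) auto
  ultimately show ?thesis
    unfolding U_def by (meson countable_Un countable_subset)
qed

lemma card_le_aleph1_disjoint_rays:
  fixes adj :: "'a \<times> nat \<Rightarrow> 'a \<times> nat \<Rightarrow> bool"
  assumes "disjoint_rays (T \<times> UNIV) adj \<R>"
  shows "card_le_aleph1 \<R>"
proof -
  have "infinite T"
    using has_card_aleph1_uncountable aronszajn_tree countable_finite unfolding aronszajn_tree_def
    by blast
  then have "|T \<times> (UNIV :: nat set)| =o |T|"
    using card_of_Times_infinite_simps(1) infinite_iff_card_of_nat by blast
  then have "|\<R>| \<le>o |T|"
    using disjoint_rays_card_of_le[OF assms] ordLeq_ordIso_trans by blast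
  moreover have "|T| =o cardSuc |UNIV :: nat set|"
    using aronszajn_tree unfolding aronszajn_tree_def has_card_aleph1_def by blast
  ultimately show ?thesis
    unfolding card_le_aleph1_def using ordLeq_ordIso_trans by blast
qed

lemma covered_countable:
  assumes "countable C" and "C \<subseteq> T"
  shows "countable (covered C)"
proof -
  have "countable (\<Union>c\<in>C. down_closed T le c)"
    using assms down_closed_countable by (intro countable_UN) auto
  then show ?thesis
    unfolding covered_def by (rule countable_below_subset)
qed

end

section \<open>Ray inflations of sparse T-graphs\<close>

locale sparse_graph = tree +
  fixes G :: "'a \<Rightarrow> 'a \<Rightarrow> bool"
  assumes sparse: "sparse_T_graph T le G"
begin

abbreviation inflation :: "'a \<times> nat \<Rightarrow> 'a \<times> nat \<Rightarrow> bool" where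
  "inflation \<equiv> ray_inflation T le G"

lemma down_nbrs_cofinal: "t \<in> T \<Longrightarrow> s \<in> below T le t \<Longrightarrow> \<exists>e\<in>down_nbrs T le G t. le s e"
  using sparse unfolding sparse_T_graph_def T_graph_def by blast

lemma down_nbrs_below: "down_nbrs T le G t \<subseteq> below T le t"
  unfolding down_nbrs_def below_def by blast

lemma limit_down_nbrs_omega:
  assumes "is_limit T le t" and "t \<noteq> root"
  shows "order_type_omega T le (down_nbrs T le G t)"
  using sparse assms is_root_iff unfolding sparse_T_graph_def is_limit_def by blast

lemma nth_down_nbr:
  assumes "is_limit T le u" and "u \<noteq> root"
  shows "nth_down_nbr T le G u n \<in> down_nbrs T le G u"
    and "card {e \<in> down_nbrs T le G u. tlt le e (nth_down_nbr T le G u n)} = n"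
  using theI'[OF order_type_omega_nth[OF limit_down_nbrs_omega[OF assms]]]
  unfolding nth_down_nbr_def by auto

lemma inj_nth_down_nbr:
  assumes "is_limit T le u" and "u \<noteq> root"
  shows "inj (nth_down_nbr T le G u)"
  by (rule injI) (metis nth_down_nbr(2)[OF assms])

lemma covered_if_infinitely_many_down_nbrs:
  assumes "is_limit T le u" "u \<noteq> root" and "infinite (down_nbrs T le G u \<inter> C)"
  shows "u \<in> covered C"
proof -
  have "s \<in> (\<Union>c\<in>C. down_closed T le c)" if s: "s \<in> below T le u" for s
  proof -
    have "u \<in> T"
      using assms(1) unfolding is_limit_def by blast
    then obtain e where e: "e \<in> down_nbrs T le G u" "le s e"
      using down_nbrs_cofinal s by blast
    let ?before = "insert e {e' \<in> down_nbrs T le G u. tlt le e' e}"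
    have "finite ?before"
      using limit_down_nbrs_omega[OF assms(1,2)] e(1) unfolding order_type_omega_def by blast
    then obtain c where c: "c \<in> down_nbrs T le G u \<inter> C" "c \<notin> ?before"
      using assms(3) by (meson finite_subset subsetI)
    have "c \<in> T" "e \<in> T" "s \<in> T" "tlt le c u" "tlt le e u"
      using c(1) e(1) s down_nbrs_below unfolding below_def by auto
    then have "le e c"
      using c tree_comparable[OF \<open>u \<in> T\<close>, of c e] unfolding tlt_def by auto
    then have "le s c"
      using tree_trans \<open>s \<in> T\<close> \<open>e \<in> T\<close> \<open>c \<in> T\<close> e(2) by blast
    then show ?thesis
      using c(1) \<open>s \<in> T\<close> unfolding down_closed_def by blast
  qed
  then show ?thesis
    using assms(1) unfolding covered_def is_limit_def by blast
qed

lemma inflation_baseE: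
  assumes "inflation_base T le G (a, n) (b, m)"
  obtains (vertical) "a \<in> T" "b = a" "m = Suc n"
  | (pred) "is_pred T le b a" "m = n"
  | (limit) "is_limit T le a" "a \<noteq> root" "b = nth_down_nbr T le G a n" "m = n"
  using assms unfolding inflation_base_def is_root_iff by blast

lemma inflation_sym: "inflation x y \<Longrightarrow> inflation y x"
  unfolding ray_inflation_def by blast

lemma inflation_base_down:
  assumes "inflation_base T le G (a, n) (b, m)"
  shows "a \<in> T" and "b \<in> T" and "le b a"
proof -
  from assms have "a \<in> T \<and> b \<in> T \<and> le b a"
  proof (cases rule: inflation_baseE)
    case vertical
    then show ?thesis using tree_refl by simp
  next
    case pred
    then show ?thesis unfolding is_pred_def tlt_def by blast
  next
    case limit
    then show ?thesis
      using nth_down_nbr(1)[OF limit(1,2)] down_nbrs_below unfolding is_limit_def below_def tlt_def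
      by blast
  qed
  then show "a \<in> T" "b \<in> T" "le b a"
    by blast+
qed

lemma inflation_edge:
  assumes "inflation (a, n) (b, m)"
  shows "a \<in> T" and "b \<in> T" and "le a b \<or> le b a"
  using assms inflation_base_down unfolding ray_inflation_def by blast+

lemma cone_exit_below:
  assumes "u \<in> T" and "inflation (s, n) (t, m)" and "le u t" and "\<not> le u s"
  shows "tlt le s u"
proof -
  have "s \<in> T" "t \<in> T" "le s t \<or> le t s"
    using inflation_edge[OF assms(2)] by auto
  then have "le s t"
    using assms(1,3,4) tree_trans by blast
  then have "le s u \<or> le u s"
    using tree_comparable[of t s u] \<open>s \<in> T\<close> \<open>t \<in> T\<close> assms(1,3) by blast
  then show ?thesis
    using assms(1,4) tree_refl unfolding tlt_def by blast
qed

lemma ray_stays_in_cone: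
  assumes R: "is_ray (T \<times> UNIV) inflation R" and "u \<in> T" and "le u (fst (R 0))"
    and avoids: "\<And>k. fst (R k) \<notin> below T le u"
  shows "le u (fst (R k))"
proof (induction k)
  case 0
  then show ?case using assms(3) by simp
next
  case (Suc k)
  have "inflation (fst (R k), snd (R k)) (fst (R (Suc k)), snd (R (Suc k)))"
    using R unfolding is_ray_def by simp
  then have "fst (R (Suc k)) \<in> T" and "le u (fst (R (Suc k))) \<or> tlt le (fst (R (Suc k))) u"
    using cone_exit_below[OF \<open>u \<in> T\<close> inflation_sym] Suc.IH inflation_edge by blast+
  then show ?case
    using avoids[of "Suc k"] unfolding below_def by blast
qed

lemma inflation_step_down:
  assumes "t \<in> T" and "t \<noteq> root"
  obtains t' where "t' \<in> T" "tlt le t' t" "inflation (t', n) (t, n)"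
proof (cases "\<exists>p. is_pred T le p t")
  case True
  then obtain p where "is_pred T le p t"
    by blast
  then have "inflation_base T le G (t, n) (p, n)"
    unfolding inflation_base_def by blast
  then show thesis
    using that \<open>is_pred T le p t\<close> unfolding ray_inflation_def is_pred_def by blast
next
  case False
  then have "is_limit T le t" and "\<not> is_root T le t"
    using assms is_root_iff unfolding is_limit_def by auto
  then have "inflation_base T le G (t, n) (nth_down_nbr T le G t n, n)"
    unfolding inflation_base_def by blast
  moreover have "nth_down_nbr T le G t n \<in> below T le t"
    using nth_down_nbr(1)[OF \<open>is_limit T le t\<close> assms(2)] down_nbrs_below by blast
  ultimately show thesis
    using that unfolding ray_inflation_def below_def by blast
qed

lemma level_path:
  assumes "t \<in> T"
  shows "\<exists>p. is_path (T \<times> UNIV) inflation p \<and> hd p = (root, n) \<and> last p = (t, n) \<and>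
    set p \<subseteq> down_closed T le t \<times> {n}"
  using assms
proof (induction rule: tlt_induct)
  case (less t)
  show ?case
  proof (cases "t = root")
    case True
    then show ?thesis
      using less.hyps tree_refl unfolding is_path_def down_closed_def
      by (intro exI[of _ "[(t, n)]"]) auto
  next
    case False
    then obtain t' where t': "t' \<in> T" "tlt le t' t" "inflation (t', n) (t, n)"
      using inflation_step_down less.hyps by blast
    then obtain p where p: "is_path (T \<times> UNIV) inflation p" "hd p = (root, n)" "last p = (t', n)"
      "set p \<subseteq> down_closed T le t' \<times> {n}"
      using less.IH by blast
    have "down_closed T le t' \<subseteq> down_closed T le t"
      using t' less.hyps tree_trans unfolding down_closed_def tlt_def by blast
    moreover have "t \<notin> down_closed T le t'"
      using tlt_not_le[OF t'(1) less.hyps t'(2)] unfolding down_closed_def by blast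
    ultimately have "is_path (T \<times> UNIV) inflation (p @ [(t, n)])"
      and "set (p @ [(t, n)]) \<subseteq> down_closed T le t \<times> {n}"
      using is_path_snoc[OF p(1)] p(3,4) t'(3) less.hyps tree_refl unfolding down_closed_def
      by auto
    moreover have "p \<noteq> []"
      using p(1) unfolding is_path_def by blast
    ultimately show ?thesis
      using p(2) by (intro exI[of _ "p @ [(t, n)]"]) simp
  qed
qed

lemma vertical_ray: "t \<in> T \<Longrightarrow> is_ray (T \<times> UNIV) inflation (Pair t)"
  unfolding is_ray_def ray_inflation_def inflation_base_def by (auto intro: injI)

lemma vertical_rays_equiv:
  assumes "t \<in> T"
  shows "rays_equiv (T \<times> UNIV) inflation (Pair root) (Pair t)"
proof -
  obtain path where path: "\<And>n. is_path (T \<times> UNIV) inflation (path n)"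
    "\<And>n. hd (path n) = (root, n)" "\<And>n. last (path n) = (t, n)"
    "\<And>n. set (path n) \<subseteq> down_closed T le t \<times> {n}"
    using level_path[OF assms] by metis
  have "inj path"
    using path(2) by (metis Pair_inject injI)
  then have "infinite (range path)"
    using finite_imageD by blast
  moreover have "disjoint_paths (range path)"
    unfolding disjoint_paths_def
  proof (intro ballI impI)
    fix p q assume "p \<in> range path" "q \<in> range path" "p \<noteq> q"
    then obtain n m where "p = path n" "q = path m" "n \<noteq> m"
      by blast
    then show "set p \<inter> set q = {}"
      using path(4)[of n] path(4)[of m] by blast
  qed
  moreover have "AB_path (T \<times> UNIV) inflation (range (Pair root)) (range (Pair t)) (path n)" for n
  proof -
    have "hd (path n) \<in> set (path n)" "last (path n) \<in> set (path n)"
      using path(1) unfolding is_path_def by auto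
    then show ?thesis
      using path[of n] unfolding AB_path_def by auto
  qed
  ultimately show ?thesis
    unfolding rays_equiv_def using vertical_ray[OF assms] vertical_ray[OF root_in_T] by blast
qed

end

section \<open>The end of the vertical rays\<close>

locale sparse_aronszajn_graph = aronszajn T le + sparse_graph T le G
  for T :: "'a set" and le :: "'a \<Rightarrow> 'a \<Rightarrow> bool" and G :: "'a \<Rightarrow> 'a \<Rightarrow> bool"
begin

lemma vertical_end:
  defines "\<epsilon> \<equiv> {S. rays_equiv (T \<times> UNIV) inflation (Pair root) S}"
  shows "is_end (T \<times> UNIV) inflation \<epsilon>" and "end_degree_aleph1 (T \<times> UNIV) inflation \<epsilon>"
proof -
  show "is_end (T \<times> UNIV) inflation \<epsilon>"
    unfolding is_end_def \<epsilon>_def using vertical_ray[OF root_in_T] by (intro exI[of _ "Pair root"]) simp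
  let ?V = "Pair ` T :: (nat \<Rightarrow> 'a \<times> nat) set"
  have "?V \<subseteq> \<epsilon>"
    unfolding \<epsilon>_def using vertical_rays_equiv by blast
  moreover have "disjoint_rays (T \<times> UNIV) inflation ?V"
    unfolding disjoint_rays_def using vertical_ray by auto
  moreover have "inj_on (Pair :: 'a \<Rightarrow> nat \<Rightarrow> 'a \<times> nat) T"
  proof (rule inj_onI)
    fix x y :: 'a assume "(Pair x :: nat \<Rightarrow> 'a \<times> nat) = Pair y"
    then have "Pair x (0 :: nat) = Pair y 0"
      by simp
    then show "x = y"
      by simp
  qed
  then have "bij_betw Pair T ?V"
    by (rule inj_on_imp_bij_betw)
  then have "|T| =o |?V|"
    unfolding card_of_ordIso[symmetric] by blast
  then have "has_card_aleph1 ?V"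
    using aronszajn_tree ordIso_transitive ordIso_symmetric
    unfolding aronszajn_tree_def has_card_aleph1_def by blast
  ultimately show "end_degree_aleph1 (T \<times> UNIV) inflation \<epsilon>"
    unfolding end_degree_aleph1_def using card_le_aleph1_disjoint_rays by blast
qed

end

section \<open>Ray graphs of uncountably many rays\<close>

text \<open>\<open>Sf t\<close> is the finite set \<open>S\<^sub>t\<close> of the hypothesis of the theorem.\<close>

locale aronszajn_inflation = sparse_aronszajn_graph +
  fixes Sf :: "'a \<Rightarrow> 'a set"
  assumes finite_Sf: "t \<in> T \<Longrightarrow> finite (Sf t)"
    and down_nbrs_below_in_Sf:
      "t \<in> T \<Longrightarrow> t' \<in> T \<Longrightarrow> tlt le t t' \<Longrightarrow> down_nbrs T le G t' \<inter> below T le t \<subseteq> Sf t"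
begin

lemma nth_down_nbr_in_Sf:
  assumes "is_limit T le t" "t \<noteq> root" and "s = nth_down_nbr T le G t n"
    and "u \<in> T" "tlt le s u" "tlt le u t"
  shows "s \<in> Sf u" and "n \<le> card (Sf s)"
proof -
  have "s \<in> down_nbrs T le G t" and "t \<in> T"
    using nth_down_nbr(1)[OF assms(1,2)] assms(1,3) unfolding is_limit_def by auto
  then have "s \<in> T" "tlt le s t"
    using down_nbrs_below unfolding below_def by auto
  show "s \<in> Sf u"
    using down_nbrs_below_in_Sf[OF assms(4) \<open>t \<in> T\<close> assms(6)] \<open>s \<in> down_nbrs T le G t\<close>
      \<open>s \<in> T\<close> assms(5) unfolding below_def by blast
  have "{e \<in> down_nbrs T le G t. tlt le e s} \<subseteq> Sf s"
    using down_nbrs_below_in_Sf[OF \<open>s \<in> T\<close> \<open>t \<in> T\<close> \<open>tlt le s t\<close>] unfolding down_nbrs_def below_def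
    by blast
  then show "n \<le> card (Sf s)"
    using card_mono[OF finite_Sf[OF \<open>s \<in> T\<close>]] nth_down_nbr(2)[OF assms(1,2)] assms(3) by metis
qed

lemma cone_entry_cases:
  assumes "u \<in> T" and edge: "inflation (s, n) (t, m)" and "le u t" and "\<not> le u s"
  shows "is_pred T le s u \<or> (is_limit T le u \<and> u \<noteq> root \<and> s = nth_down_nbr T le G u n) \<or>
    (s \<in> Sf u \<and> n \<le> card (Sf s))"
proof -
  have "s \<in> T" "t \<in> T" and "tlt le s u"
    using inflation_edge[OF edge] cone_exit_below[OF assms] by auto
  then have "\<not> le t s"
    using assms(1,3,4) tree_trans by blast
  then have "\<not> inflation_base T le G (s, n) (t, m)"
    using inflation_base_down(3) by blast
  then have "inflation_base T le G (t, m) (s, n)"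
    using edge unfolding ray_inflation_def by blast
  then show ?thesis
  proof (cases rule: inflation_baseE)
    case vertical
    then show ?thesis
      using assms(3,4) by simp
  next
    case pred
    then have "u = t"
      using assms(1,3) \<open>tlt le s u\<close> unfolding is_pred_def tlt_def by blast
    then show ?thesis
      using pred by simp
  next
    case limit
    show ?thesis
    proof (cases "u = t")
      case False
      then have "tlt le u t"
        using assms(3) unfolding tlt_def by blast
      then show ?thesis
        using nth_down_nbr_in_Sf[OF limit(1-3) assms(1) \<open>tlt le s u\<close>] limit(4) by simp
    qed (use limit in simp)
  qed
qed

lemma finite_cone_entries:
  assumes "u \<in> T" and "u \<notin> covered (fst ` X)"
  shows "finite {x \<in> X. \<exists>y. inflation x y \<and> \<not> le u (fst x) \<and> le u (fst y)}"
proof -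
  let ?nth = "nth_down_nbr T le G u"
  let ?L = "if is_limit T le u \<and> u \<noteq> root then (\<lambda>n. (?nth n, n)) ` {n. (?nth n, n) \<in> X} else {}"
  have "finite {n. (?nth n, n) \<in> X}" if lim: "is_limit T le u" "u \<noteq> root"
  proof (rule ccontr)
    assume "infinite {n. (?nth n, n) \<in> X}"
    moreover have "inj_on ?nth {n. (?nth n, n) \<in> X}"
      using inj_nth_down_nbr[OF lim] by (rule inj_on_subset) simp
    ultimately have "infinite (?nth ` {n. (?nth n, n) \<in> X})"
      using finite_imageD by blast
    moreover have "?nth ` {n. (?nth n, n) \<in> X} \<subseteq> down_nbrs T le G u \<inter> fst ` X"
      using nth_down_nbr(1)[OF lim] by force
    ultimately have "infinite (down_nbrs T le G u \<inter> fst ` X)"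
      using finite_subset by blast
    then show False
      using covered_if_infinitely_many_down_nbrs[OF lim] assms(2) by blast
  qed
  then have "finite ?L"
    by simp
  moreover have "finite (Sigma (Sf u) (\<lambda>s. {..card (Sf s)}))"
    using finite_Sf[OF assms(1)] by (intro finite_SigmaI) simp_all
  moreover have "{x \<in> X. \<exists>y. inflation x y \<and> \<not> le u (fst x) \<and> le u (fst y)} \<subseteq>
    ?L \<union> Sigma (Sf u) (\<lambda>s. {..card (Sf s)})"
  proof (rule subsetI, elim CollectE conjE exE)
    fix x y assume "x \<in> X" and xy: "inflation x y" "\<not> le u (fst x)" "le u (fst y)"
    obtain s n t m where "x = (s, n)" "y = (t, m)"
      by (cases x, cases y)
    moreover have "s \<in> fst ` X"
      using \<open>x \<in> X\<close> \<open>x = (s, n)\<close> by force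
    then have "\<not> is_pred T le s u"
      using covered_if_pred assms(2) by blast
    ultimately have "(is_limit T le u \<and> u \<noteq> root \<and> s = ?nth n) \<or> (s \<in> Sf u \<and> n \<le> card (Sf s))"
      using cone_entry_cases[OF assms(1), of s n t m] xy by simp
    then show "x \<in> ?L \<union> Sigma (Sf u) (\<lambda>s. {..card (Sf s)})"
      using \<open>x \<in> X\<close> \<open>x = (s, n)\<close> by auto
  qed
  ultimately show ?thesis
    by (meson finite_UnI finite_subset)
qed

lemma separating_cone:
  assumes R: "is_ray (T \<times> UNIV) inflation R" and S: "is_ray (T \<times> UNIV) inflation S"
    and avoid: "\<And>k. fst (R k) \<notin> covered (fst ` range S)"
  obtains u where "u \<in> T" and "u \<notin> covered (fst ` range S)"
    and "below T le u \<subseteq> covered (fst ` range S)"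
    and "\<And>k. le u (fst (R k))" and "\<And>v. v \<in> range S \<Longrightarrow> \<not> le u (fst v)"
proof -
  let ?D = "covered (fst ` range S)"
  have "fst (R 0) \<in> T"
    using is_ray_in_vertices[OF R] by (simp add: mem_Times_iff)
  then obtain u where u: "u \<in> T" "le u (fst (R 0))" "u \<notin> ?D" "below T le u \<subseteq> ?D"
    using avoid by (rule minimal_outside)
  have "fst (R k) \<notin> below T le u" for k
    using avoid u(4) by blast
  then have "le u (fst (R k))" for k
    by (rule ray_stays_in_cone[OF R u(1,2)])
  moreover have "\<not> le u (fst v)" if "v \<in> range S" for v
  proof
    assume "le u (fst v)"
    have "fst ` range S \<subseteq> T"
      using is_ray_in_vertices[OF S] by (auto simp: mem_Times_iff)
    then have "fst v \<in> ?D"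
      using subset_covered that by blast
    then show False
      using covered_down_closed u(1,3) \<open>le u (fst v)\<close> by blast
  qed
  ultimately show thesis
    using that u(1,3,4) by blast
qed

text \<open>Only finitely many edges enter the cone above \<open>u\<close> from \<open>S\<close>; a path from \<open>S\<close> to \<open>R\<close>
  avoiding them must enter it from a point below \<open>u\<close>, hence from a covered point.\<close>

lemma disjoint_paths_meet_covered:
  assumes R: "is_ray (T \<times> UNIV) inflation R" and S: "is_ray (T \<times> UNIV) inflation S"
    and avoid: "\<And>k. fst (R k) \<notin> covered (fst ` range S)"
    and Q: "infinite Q" "disjoint_paths Q"
    and paths: "\<And>q. q \<in> Q \<Longrightarrow> is_path (T \<times> UNIV) inflation q \<and> joins q R S"
  obtains q x where "q \<in> Q" and "x \<in> inner_vertices q" and "fst x \<in> covered (fst ` range S)"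
proof -
  let ?D = "covered (fst ` range S)"
  obtain u where u: "u \<in> T" "u \<notin> ?D" "below T le u \<subseteq> ?D"
    and R_in: "\<And>k. le u (fst (R k))" and S_out: "\<And>v. v \<in> range S \<Longrightarrow> \<not> le u (fst v)"
    using separating_cone[OF R S avoid] by blast
  define F where "F = {x \<in> range S. \<exists>y. inflation x y \<and> \<not> le u (fst x) \<and> le u (fst y)}"
  have "finite F"
    unfolding F_def using finite_cone_entries[OF u(1,2)] .
  then obtain q where q: "q \<in> Q" "set q \<inter> F = {}"
    using disjoint_paths_avoid_finite[OF Q] by blast
  have path: "is_path (T \<times> UNIV) inflation q" and "joins q R S"
    using paths[OF q(1)] by auto
  have R_in': "le u (fst v)" if "v \<in> range R" for v
    using that R_in by blast
  have ends: "hd q \<in> range R \<union> range S" "last q \<in> range R \<union> range S"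
    using \<open>joins q R S\<close> unfolding joins_def by blast+
  have "le u (fst (hd q)) \<noteq> le u (fst (last q))"
    using \<open>joins q R S\<close> R_in' S_out unfolding joins_def by blast
  then obtain x y where x: "x \<in> set q" "inflation x y" "\<not> le u (fst x)" "le u (fst y)"
    using path_crosses_into[OF path inflation_sym, of "\<lambda>v. le u (fst v)"] by blast
  then have "inflation (fst x, snd x) (fst y, snd y)"
    by simp
  then have "fst x \<in> below T le u"
    using cone_exit_below[OF u(1)] inflation_edge(1) x(3,4) unfolding below_def by blast
  then have "fst x \<in> ?D"
    using u(3) by blast
  then have "x \<notin> range R"
    using avoid by blast
  moreover have "x \<notin> F"
    using q(2) x(1) by blast
  then have "x \<notin> range S"
    using x(2-4) unfolding F_def by blast
  ultimately have "x \<noteq> hd q" and "x \<noteq> last q"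
    using ends by blast+
  then have "x \<in> inner_vertices q"
    by (rule inner_verticesI[OF x(1)])
  then show thesis
    using that q(1) \<open>fst x \<in> ?D\<close> by blast
qed

lemma inflation_ray_graph_neighbours_countable:
  assumes "disjoint_rays (T \<times> UNIV) inflation \<R>" and "is_ray_graph (T \<times> UNIV) inflation \<R> H"
  shows "countable (H `` {S})"
proof (cases "S \<in> \<R>")
  case True
  let ?D = "covered (fst ` range S)"
  have S: "is_ray (T \<times> UNIV) inflation S"
    using disjoint_raysD(1)[OF assms(1) True] .
  have "fst ` range S \<subseteq> T"
    using is_ray_in_vertices[OF S] by (auto simp: mem_Times_iff)
  then have "countable (?D \<times> (UNIV :: nat set))"
    using covered_countable by simp
  then show ?thesis
  proof (rule ray_graph_neighbours_countable[OF assms True])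
    fix R Q assume R: "R \<in> \<R>" and avoid: "range R \<inter> ?D \<times> UNIV = {}"
      and Q: "infinite Q" "disjoint_paths Q"
      and paths: "\<And>q. q \<in> Q \<Longrightarrow> is_path (T \<times> UNIV) inflation q \<and> joins q R S"
    have "fst (R k) \<notin> ?D" for k
    proof
      assume "fst (R k) \<in> ?D"
      then have "R k \<in> range R \<inter> ?D \<times> UNIV"
        by (simp add: mem_Times_iff)
      with avoid show False
        by simp
    qed
    then obtain q x where "q \<in> Q" "x \<in> inner_vertices q" "fst x \<in> ?D"
      using disjoint_paths_meet_covered[OF disjoint_raysD(1)[OF assms(1) R] S _ Q paths] by blast
    then have "x \<in> inner_vertices q \<inter> ?D \<times> UNIV"
      by (simp add: mem_Times_iff)
    with \<open>q \<in> Q\<close> show "\<exists>q\<in>Q. inner_vertices q \<inter> ?D \<times> UNIV \<noteq> {}"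
      by blast
  qed
next
  case False
  have "H \<subseteq> \<R> \<times> \<R>"
    using assms(2) by (elim is_ray_graphE)
  with False have "H `` {S} = {}"
    by blast
  then show ?thesis
    by simp
qed

lemma no_connected_ray_graph:
  assumes "disjoint_rays (T \<times> UNIV) inflation \<R>" and "has_card_aleph1 \<R>"
  shows "\<not> admits_connected_ray_graph (T \<times> UNIV) inflation \<R>"
proof
  assume "admits_connected_ray_graph (T \<times> UNIV) inflation \<R>"
  then obtain H where "is_ray_graph (T \<times> UNIV) inflation \<R> H" and "connected_on \<R> H"
    unfolding admits_connected_ray_graph_def by blast
  then have "countable \<R>"
    using connected_on_countable inflation_ray_graph_neighbours_countable[OF assms(1)] by blast
  then show False
    using has_card_aleph1_uncountable[OF assms(2)] by blast
qed

end

theorem theorem6p6: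
  fixes T :: "'a set" and le :: "'a \<Rightarrow> 'a \<Rightarrow> bool" and G :: "'a \<Rightarrow> 'a \<Rightarrow> bool"
  assumes "aronszajn_tree T le"
    and "sparse_T_graph T le G"
    and "\<forall>t\<in>T. \<exists>S. finite S \<and> S \<subseteq> below T le t \<and>
           (\<forall>t'\<in>T. tlt le t t' \<longrightarrow> down_nbrs T le G t' \<inter> below T le t \<subseteq> S)"
  shows "\<exists>\<epsilon>. is_end (T \<times> UNIV) (ray_inflation T le G) \<epsilon> \<and>
           end_degree_aleph1 (T \<times> UNIV) (ray_inflation T le G) \<epsilon> \<and>
           \<not> (\<exists>\<R>. \<R> \<subseteq> \<epsilon> \<and> disjoint_rays (T \<times> UNIV) (ray_inflation T le G) \<R> \<and>
                  has_card_aleph1 \<R> \<and>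
                  admits_connected_ray_graph (T \<times> UNIV) (ray_inflation T le G) \<R>)"
proof -
  obtain Sf where Sf: "\<forall>t\<in>T. finite (Sf t) \<and> Sf t \<subseteq> below T le t \<and>
      (\<forall>t'\<in>T. tlt le t t' \<longrightarrow> down_nbrs T le G t' \<inter> below T le t \<subseteq> Sf t)"
    by (rule exE[OF bchoice[OF assms(3)]])
  have "order_tree T le"
    using assms(1)[unfolded aronszajn_tree_def, THEN conjunct1] .
  then interpret aronszajn_inflation T le G Sf
    by unfold_locales (use assms(1,2) Sf in blast)+
  let ?\<epsilon> = "{S. rays_equiv (T \<times> UNIV) inflation (Pair root) S}"
  have "\<not> (\<exists>\<R>. \<R> \<subseteq> ?\<epsilon> \<and> disjoint_rays (T \<times> UNIV) inflation \<R> \<and> has_card_aleph1 \<R> \<and>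
      admits_connected_ray_graph (T \<times> UNIV) inflation \<R>)"
    using no_connected_ray_graph by blast
  then show ?thesis
    by (intro exI[of _ ?\<epsilon>] conjI vertical_end)
qed

end
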